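(* In the asynchronous online testing setting described in the context, assume that the null $p$-values are independent of each other and of the non-null $p$-values, and that the test levels and candidacy thresholds are monotone. Let $M\in\mathbb{N}$ and let $g:(\mathbb{N}\cup\{0\})^M\to(0,\infty)$ be coordinate-wise non-decreasing. Then for any index $t\le M$ with $t\in\mathcal{H}^0$, $$\mathbb{E}\Big[\frac{\alpha_t\mathbf{1}\{P_t>\lambda_t\}}{(1-\lambda_t)\,g(|\mathcal{R}|_{1:M})}\,\Big|\,\mathcal{F}\Big]\ \ge\ \mathbb{E}\Big[\frac{\alpha_t}{g(|\mathcal{R}|_{1:M})}\,\Big|\,\mathcal{F}\Big]\ \ge\ \mathbb{E}\Big[\frac{\mathbf{1}\{P_t\le\alpha_t\}}{g(|\mathcal{R}|_{1:M})}\,\Big|\,\mathcal{F}\Big],$$ where $|\mathcal{R}|_{1:M}=(|\mathcal{R}_1|,\dots,|\mathcal{R}_M|)$ and $\mathcal{F}=\mathcal{F}_{\mathrm{async}}^{-\mathcal{X}^{E_t}}$.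
   Context: Hypotheses $H_1,H_2,\dots$ are tested; test $t$ starts at step $t$ with test level $\alpha_t\ge0$ and candidacy threshold $\lambda_t$ with $\alpha_t\le\lambda_t<1$, and produces a $p$-value $P_t$; each null $p$-value is super-uniform, $\mathbb{P}(P_t\le u)\le u$ for $u\in[0,1]$. $\mathcal{H}^0$ is the fixed set of true null indices. Test $t$ has a fixed decision time $E_t\ge t$. For each step $s$, $\mathcal{R}_s=\{i\in[s]:E_i=s,\ P_i\le\alpha_i\}$ and $\mathcal{C}_s=\{i\in[s]:E_i=s,\ P_i\le\lambda_i\}$. The levels are $\alpha_i=g_i(\mathcal{R}_1,\mathcal{C}_1,\dots,\mathcal{R}_{i-1},\mathcal{C}_{i-1})$ and $\lambda_i=h_i(\mathcal{R}_1,\mathcal{C}_1,\dots,\mathcal{R}_{i-1},\mathcal{C}_{i-1})$ for deterministic functions $g_i,h_i$ (in the LORD-type case they depend only on the $\mathcal{R}$'s). Monotone means each $g_i,h_i$ does not decrease when any argument $\mathcal{R}_k$ or $\mathcal{C}_k$ is replaced by a superset, the others fixed. $\mathcal{F}_{\mathrm{async}}^{-\mathcal{X}^{s}}$ denotes $\sigma(\mathcal{R}_1,\mathcal{C}_1,\dots,\mathcal{R}_{s-1},\mathcal{C}_{s-1})$ (or $\sigma(\mathcal{R}_1,\dots,\mathcal{R}_{s-1})$ in the LORD-type case). *)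

theory Defs
  imports "HOL-Probability.Probability"
begin

text \<open>A history is the list [(R_1,C_1), ..., (R_s,C_s)] of rejection and candidate sets.
  Level rules ga, ha :: nat => history => real give alpha_i = ga i [(R_1,C_1),...,(R_{i-1},C_{i-1})]
  and lambda_i = ha i [...]. Tests are indexed from 1; p is the vector of p-values,
  E the fixed decision times.\<close>

type_synonym history = "(nat set \<times> nat set) list"

fun hist :: "(nat \<Rightarrow> history \<Rightarrow> real) \<Rightarrow> (nat \<Rightarrow> history \<Rightarrow> real) \<Rightarrow> (nat \<Rightarrow> nat)
    \<Rightarrow> (nat \<Rightarrow> real) \<Rightarrow> nat \<Rightarrow> history" where
  "hist ga ha E p 0 = []"
| "hist ga ha E p (Suc s) =
     (let H = hist ga ha E p s in
      H @ [({i \<in> {1..Suc s}. E i = Suc s \<and> p i \<le> ga i (take (i - 1) H)},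
            {i \<in> {1..Suc s}. E i = Suc s \<and> p i \<le> ha i (take (i - 1) H)})])"

definition test_level :: "(nat \<Rightarrow> history \<Rightarrow> real) \<Rightarrow> (nat \<Rightarrow> history \<Rightarrow> real) \<Rightarrow> (nat \<Rightarrow> nat)
    \<Rightarrow> (nat \<Rightarrow> real) \<Rightarrow> nat \<Rightarrow> real" where
  "test_level ga ha E p i = ga i (hist ga ha E p (i - 1))"

definition cand_threshold :: "(nat \<Rightarrow> history \<Rightarrow> real) \<Rightarrow> (nat \<Rightarrow> history \<Rightarrow> real) \<Rightarrow> (nat \<Rightarrow> nat)
    \<Rightarrow> (nat \<Rightarrow> real) \<Rightarrow> nat \<Rightarrow> real" where
  "cand_threshold ga ha E p i = ha i (hist ga ha E p (i - 1))"

definition rej_set :: "(nat \<Rightarrow> history \<Rightarrow> real) \<Rightarrow> (nat \<Rightarrow> history \<Rightarrow> real) \<Rightarrow> (nat \<Rightarrow> nat)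
    \<Rightarrow> (nat \<Rightarrow> real) \<Rightarrow> nat \<Rightarrow> nat set" where
  "rej_set ga ha E p s = fst (hist ga ha E p s ! (s - 1))"

definition monotone_rule :: "(nat \<Rightarrow> history \<Rightarrow> real) \<Rightarrow> bool" where
  "monotone_rule f \<longleftrightarrow> (\<forall>i H H'. list_all2 (\<lambda>(R, C) (R', C'). R \<subseteq> R' \<and> C \<subseteq> C') H H'
       \<longrightarrow> f i H \<le> f i H')"

definition rv_events :: "'a measure \<Rightarrow> ('a \<Rightarrow> real) \<Rightarrow> 'a set set" where
  "rv_events M X = {X -` A \<inter> space M | A. A \<in> sets borel}"

end

(*
  Let D0 and D1 be the histories obtained by replacing P_t by 0 and by 1. Both are functions
  of the other p-values, hence independent of P_t. Both agree with the observed history D up to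
  step E_t - 1, so the F-sets and the levels alpha_t, lambda_t are functions of each of them;
  moreover D = D0 when P_t <= alpha_t and D = D1 when P_t > lambda_t. Monotonicity of the level
  rules gives D1 <= D <= D0 componentwise, so g(|R|) is sandwiched between its values at D1 and
  at D0. Conditioning on the finite-valued D0 and using super-uniformity,
    E[1{P_t <= alpha_t} / g(D); A] = E[1{P_t <= alpha_t} / g(D0); A]
                                   <= E[alpha_t / g(D0); A] <= E[alpha_t / g(D); A]
  for every A in F; symmetrically, D1 and P(P_t > lambda) >= 1 - lambda give the other
  inequality. Inequalities between integrals over all F-sets yield the conditional ones.
*)
theory Submission
  imports Defs
begin

section \<open>Histories\<close>

lemma length_hist [simp]: "length (hist ga ha E p n) = n"
  by (induction n) (simp_all add: Let_def)

lemma take_hist: "s \<le> n \<Longrightarrow> take s (hist ga ha E p n) = hist ga ha E p s"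
proof (induction n)
  case (Suc n)
  then show ?case
    by (cases "s = Suc n") (simp_all add: Let_def)
qed simp

definition histories :: "nat \<Rightarrow> history set" where
  "histories n = {H. set H \<subseteq> Pow {1..n} \<times> Pow {1..n} \<and> length H = n}"

lemma finite_histories: "finite (histories n)"
  unfolding histories_def by (intro finite_lists_length_eq) auto

lemma hist_in_histories: "hist ga ha E p n \<in> histories n"
proof (induction n)
  case (Suc n)
  then have "set (hist ga ha E p n) \<subseteq> Pow {1..Suc n} \<times> Pow {1..Suc n}"
    unfolding histories_def by fastforce
  then show ?case
    unfolding histories_def by (auto simp: Let_def)
qed (simp add: histories_def)

lemma hist_cong_before_decision:
  assumes "\<And>i. i \<noteq> t \<Longrightarrow> p i = p' i" and "s < E t"
  shows "hist ga ha E p s = hist ga ha E p' s"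
  using assms(2)
proof (induction s)
  case (Suc s)
  then have "E i = Suc s \<Longrightarrow> p i = p' i" for i
    using assms(1) by (metis less_irrefl)
  with Suc show ?case
    by (simp add: Let_def cong: conj_cong)
qed simp

lemma hist_cong_same_decisions:
  assumes eq: "\<And>i. i \<noteq> t \<Longrightarrow> p i = p' i" and t: "1 \<le> t" "t \<le> E t"
    and same_rej: "p t \<le> ga t (hist ga ha E p (t - 1)) \<longleftrightarrow> p' t \<le> ga t (hist ga ha E p (t - 1))"
    and same_cand: "p t \<le> ha t (hist ga ha E p (t - 1)) \<longleftrightarrow> p' t \<le> ha t (hist ga ha E p (t - 1))"
  shows "hist ga ha E p s = hist ga ha E p' s"
proof (induction s)
  case (Suc s)
  have "p i \<le> f i (take (i - 1) (hist ga ha E p s)) \<longleftrightarrow> p' i \<le> f i (take (i - 1) (hist ga ha E p s))"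
    if "f = ga \<or> f = ha" "i \<in> {1..Suc s}" for f i
  proof (cases "i = t")
    case True
    then have "take (i - 1) (hist ga ha E p s) = hist ga ha E p (t - 1)"
      using that(2) by (auto intro: take_hist)
    then show ?thesis using True that(1) same_rej same_cand by auto
  qed (use eq in simp)
  then show ?case
    by (simp add: Let_def Suc.IH[symmetric] cong: conj_cong)
qed simp

definition hist_le :: "history \<Rightarrow> history \<Rightarrow> bool" where
  "hist_le H H' \<longleftrightarrow> list_all2 (\<lambda>(R, C) (R', C'). R \<subseteq> R' \<and> C \<subseteq> C') H H'"

lemma hist_le_take: "hist_le H H' \<Longrightarrow> hist_le (take k H) (take k H')"
  unfolding hist_le_def by (rule list_all2_takeI)

lemma monotone_ruleD: "monotone_rule f \<Longrightarrow> hist_le H H' \<Longrightarrow> f i H \<le> f i H'"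
  unfolding monotone_rule_def hist_le_def by blast

text \<open>The hypothesis relating p and p' only concerns thresholds in [0, 1), since every level
  lies there.\<close>
lemma hist_le_hist:
  assumes mono: "monotone_rule ga" "monotone_rule ha"
    and levels: "\<And>i H. 0 \<le> ga i H" "\<And>i H. ga i H \<le> ha i H" "\<And>i H. ha i H < 1"
    and smaller: "\<And>i c. 0 \<le> c \<Longrightarrow> c < 1 \<Longrightarrow> p i \<le> c \<Longrightarrow> p' i \<le> c"
  shows "hist_le (hist ga ha E p s) (hist ga ha E p' s)"
proof (induction s)
  case 0
  then show ?case by (simp add: hist_le_def)
next
  case (Suc s)
  let ?H = "hist ga ha E p s" and ?H' = "hist ga ha E p' s"
  have "p' i \<le> f i (take k ?H')" if "p i \<le> f i (take k ?H)" "f = ga \<or> f = ha" for f i k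
  proof -
    have "0 \<le> f i (take k ?H)" "f i (take k ?H) < 1"
      using levels(1-3)[of i "take k ?H"] \<open>f = ga \<or> f = ha\<close> by auto
    then have "p' i \<le> f i (take k ?H)" using smaller that(1) by blast
    also have "\<dots> \<le> f i (take k ?H')"
      using mono \<open>f = ga \<or> f = ha\<close> Suc.IH by (auto intro: monotone_ruleD hist_le_take)
    finally show ?thesis .
  qed
  then have "hist_le [({i \<in> {1..Suc s}. E i = Suc s \<and> p i \<le> ga i (take (i - 1) ?H)},
                        {i \<in> {1..Suc s}. E i = Suc s \<and> p i \<le> ha i (take (i - 1) ?H)})]
                      [({i \<in> {1..Suc s}. E i = Suc s \<and> p' i \<le> ga i (take (i - 1) ?H')},
                        {i \<in> {1..Suc s}. E i = Suc s \<and> p' i \<le> ha i (take (i - 1) ?H')})]"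
    unfolding hist_le_def by auto
  with Suc.IH show ?case
    unfolding hist_le_def by (simp add: Let_def list_all2_appendI)
qed

definition rej_counts :: "nat \<Rightarrow> history \<Rightarrow> nat list" where
  "rej_counts m H = map (\<lambda>s. card (fst (H ! (s - 1)))) [1..<m + 1]"

lemma length_rej_counts [simp]: "length (rej_counts m H) = m"
  by (simp add: rej_counts_def)

lemma rej_counts_hist:
  assumes "m \<le> n"
  shows "rej_counts m (hist ga ha E p n) = map (\<lambda>s. card (rej_set ga ha E p s)) [1..<m + 1]"
  unfolding rej_counts_def rej_set_def
proof (intro map_cong refl arg_cong[where f = card])
  fix s assume "s \<in> set [1..<m + 1]"
  then have "1 \<le> s" "s \<le> n" using assms by auto
  then show "fst (hist ga ha E p n ! (s - 1)) = fst (hist ga ha E p s ! (s - 1))"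
    by (metis take_hist diff_less less_le_trans nth_take zero_less_one)
qed

lemma rej_counts_mono:
  assumes le: "hist_le H H'" and H': "H' \<in> histories n" and "m \<le> n"
  shows "list_all2 (\<le>) (rej_counts m H) (rej_counts m H')"
  unfolding list_all2_conv_all_nth
proof (intro conjI allI impI)
  fix i assume "i < length (rej_counts m H)"
  then have i: "i < m" "i < length H'" using H' \<open>m \<le> n\<close> by (auto simp: histories_def)
  have "fst (H ! i) \<subseteq> fst (H' ! i)"
    using list_all2_nthD2[OF le[unfolded hist_le_def] i(2)] by (auto split: prod.splits)
  moreover have "fst (H' ! i) \<subseteq> {1..n}"
    using nth_mem[OF i(2)] H' unfolding histories_def by (force simp: mem_Times_iff)
  then have "finite (fst (H' ! i))" by (rule finite_subset) simp
  ultimately have "card (fst (H ! i)) \<le> card (fst (H' ! i))" by (rule card_mono[rotated])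
  then show "rej_counts m H ! i \<le> rej_counts m H' ! i"
    using i(1) by (simp add: rej_counts_def del: upt_Suc)
qed simp

section \<open>Finite-valued random variables\<close>

lemma measurable_count_space_finite_range:
  assumes "finite K" "\<And>\<omega>. \<omega> \<in> space N \<Longrightarrow> f \<omega> \<in> K"
    and "\<And>d. d \<in> K \<Longrightarrow> {\<omega> \<in> space N. f \<omega> = d} \<in> sets N"
  shows "f \<in> N \<rightarrow>\<^sub>M count_space UNIV"
proof (rule measurableI)
  fix S
  have "f -` S \<inter> space N = (\<Union>d \<in> S \<inter> K. {\<omega> \<in> space N. f \<omega> = d})"
    using assms(2) by auto
  then show "f -` S \<inter> space N \<in> sets N"
    using assms(1,3) by auto
qed simp

lemma sets_Collect_finite_set_eq:
  assumes "finite I" "\<And>i. i \<in> I \<Longrightarrow> {\<omega> \<in> space N. Q i \<omega>} \<in> sets N"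
  shows "{\<omega> \<in> space N. {i \<in> I. Q i \<omega>} = S} \<in> sets N"
proof -
  have "{\<omega> \<in> space N. \<forall>i\<in>I. Q i \<omega> \<longleftrightarrow> i \<in> S} \<in> sets N"
    using assms by (intro sets.sets_Collect_finite_All) (auto simp: sets.sets_Collect_neg)
  moreover have "{\<omega> \<in> space N. {i \<in> I. Q i \<omega>} = S} =
      (if S \<subseteq> I then {\<omega> \<in> space N. \<forall>i\<in>I. Q i \<omega> \<longleftrightarrow> i \<in> S} else {})"
    by auto
  ultimately show ?thesis by simp
qed

lemma measurable_hist:
  assumes "\<And>i c. 1 \<le> i \<Longrightarrow> {\<omega> \<in> space N. q \<omega> i \<le> c} \<in> sets N"
  shows "(\<lambda>\<omega>. hist ga ha E (q \<omega>) n) \<in> N \<rightarrow>\<^sub>M count_space UNIV"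
proof (rule measurable_count_space_finite_range[OF finite_histories hist_in_histories])
  fix H
  show "{\<omega> \<in> space N. hist ga ha E (q \<omega>) n = H} \<in> sets N"
  proof (induction n arbitrary: H)
    case 0
    then show ?case by (cases "H = []") auto
  next
    case (Suc n)
    let ?I = "{i \<in> {1..Suc n}. E i = Suc n}"
    have "{\<omega> \<in> space N. {i \<in> ?I. q \<omega> i \<le> c i} = S} \<in> sets N" for c S
      using assms by (intro sets_Collect_finite_set_eq) auto
    moreover have "{\<omega> \<in> space N. hist ga ha E (q \<omega>) (Suc n) = H} = (if H = [] then {} else
        {\<omega> \<in> space N. hist ga ha E (q \<omega>) n = butlast H} \<inter>
        {\<omega> \<in> space N. {i \<in> ?I. q \<omega> i \<le> ga i (take (i - 1) (butlast H))} = fst (last H)} \<inter>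
        {\<omega> \<in> space N. {i \<in> ?I. q \<omega> i \<le> ha i (take (i - 1) (butlast H))} = snd (last H)})"
      by (auto simp: Let_def snoc_eq_iff_butlast)
    ultimately show ?case using Suc.IH by auto
  qed
qed

lemma nn_integral_finite_range:
  assumes K: "finite K" "\<And>\<omega>. \<omega> \<in> space M \<Longrightarrow> D \<omega> \<in> K"
    and D: "D \<in> M \<rightarrow>\<^sub>M count_space UNIV"
    and f: "\<And>d. d \<in> K \<Longrightarrow> f d \<in> borel_measurable M"
  shows "(\<integral>\<^sup>+\<omega>. f (D \<omega>) \<omega> \<partial>M) = (\<Sum>d\<in>K. \<integral>\<^sup>+\<omega>. f d \<omega> * indicator (D -` {d} \<inter> space M) \<omega> \<partial>M)"
proof -
  have "f (D \<omega>) \<omega> = (\<Sum>d\<in>K. f d \<omega> * indicator (D -` {d} \<inter> space M) \<omega>)" if "\<omega> \<in> space M" for \<omega>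
    using K that by (simp add: indicator_def if_distrib cong: if_cong)
  then have "(\<integral>\<^sup>+\<omega>. f (D \<omega>) \<omega> \<partial>M) = (\<integral>\<^sup>+\<omega>. (\<Sum>d\<in>K. f d \<omega> * indicator (D -` {d} \<inter> space M) \<omega>) \<partial>M)"
    by (rule nn_integral_cong)
  also have "\<dots> = (\<Sum>d\<in>K. \<integral>\<^sup>+\<omega>. f d \<omega> * indicator (D -` {d} \<inter> space M) \<omega> \<partial>M)"
    using f measurable_sets[OF D] by (intro nn_integral_sum) auto
  finally show ?thesis .
qed

lemma vimage_in_rv_events: "B \<in> sets borel \<Longrightarrow> {\<omega> \<in> space M. X \<omega> \<in> B} \<in> rv_events M X"
  unfolding rv_events_def by blast

definition super_uniform :: "'a measure \<Rightarrow> ('a \<Rightarrow> real) \<Rightarrow> bool" where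
  "super_uniform M X \<longleftrightarrow> (\<forall>u. 0 \<le> u \<longrightarrow> u \<le> 1 \<longrightarrow> measure M {\<omega> \<in> space M. X \<omega> \<le> u} \<le> u)"

context prob_space
begin

lemma nn_integral_indep_finite_range:
  assumes K: "finite K" "\<And>\<omega>. \<omega> \<in> space M \<Longrightarrow> D \<omega> \<in> K"
    and D: "D \<in> M \<rightarrow>\<^sub>M count_space UNIV"
    and A: "\<And>d. d \<in> K \<Longrightarrow> A d \<in> events"
    and indep: "\<And>d. d \<in> K \<Longrightarrow> prob (A d \<inter> (D -` {d} \<inter> space M)) = prob (A d) * prob (D -` {d} \<inter> space M)"
  shows "(\<integral>\<^sup>+\<omega>. \<phi> (D \<omega>) * indicator (A (D \<omega>)) \<omega> \<partial>M) = (\<integral>\<^sup>+\<omega>. \<phi> (D \<omega>) * ennreal (prob (A (D \<omega>))) \<partial>M)"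
proof -
  have level: "D -` {d} \<inter> space M \<in> events" for d
    using measurable_sets[OF D] by simp
  have "(\<integral>\<^sup>+\<omega>. \<phi> (D \<omega>) * indicator (A (D \<omega>)) \<omega> \<partial>M)
      = (\<Sum>d\<in>K. \<integral>\<^sup>+\<omega>. \<phi> d * indicator (A d) \<omega> * indicator (D -` {d} \<inter> space M) \<omega> \<partial>M)"
    by (rule nn_integral_finite_range[OF K D, where f = "\<lambda>d \<omega>. \<phi> d * indicator (A d) \<omega>"])
      (use A in auto)
  also have "\<dots> = (\<Sum>d\<in>K. \<phi> d * emeasure M (A d \<inter> (D -` {d} \<inter> space M)))"
  proof (intro sum.cong refl)
    fix d assume "d \<in> K"
    have "(\<integral>\<^sup>+\<omega>. \<phi> d * indicator (A d) \<omega> * indicator (D -` {d} \<inter> space M) \<omega> \<partial>M)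
        = (\<integral>\<^sup>+\<omega>. \<phi> d * indicator (A d \<inter> (D -` {d} \<inter> space M)) \<omega> \<partial>M)"
      by (simp only: indicator_inter_arith mult.assoc)
    then show "(\<integral>\<^sup>+\<omega>. \<phi> d * indicator (A d) \<omega> * indicator (D -` {d} \<inter> space M) \<omega> \<partial>M)
        = \<phi> d * emeasure M (A d \<inter> (D -` {d} \<inter> space M))"
      using A[OF \<open>d \<in> K\<close>] level by (simp add: nn_integral_cmult_indicator sets.Int)
  qed
  also have "\<dots> = (\<Sum>d\<in>K. \<phi> d * ennreal (prob (A d)) * emeasure M (D -` {d} \<inter> space M))"
    using indep by (intro sum.cong refl) (simp add: emeasure_eq_measure ennreal_mult' mult.assoc)
  also have "\<dots> = (\<Sum>d\<in>K. \<integral>\<^sup>+\<omega>. \<phi> d * ennreal (prob (A d)) * indicator (D -` {d} \<inter> space M) \<omega> \<partial>M)"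
    using level by (simp add: nn_integral_cmult_indicator)
  also have "\<dots> = (\<integral>\<^sup>+\<omega>. \<phi> (D \<omega>) * ennreal (prob (A (D \<omega>))) \<partial>M)"
    by (rule nn_integral_finite_range[OF K D, where f = "\<lambda>d _. \<phi> d * ennreal (prob (A d))", symmetric])
      auto
  finally show ?thesis .
qed

lemma nn_integral_indicator_le_superuniform:
  assumes X: "X \<in> borel_measurable M" "super_uniform M X"
    and K: "finite K" "\<And>\<omega>. \<omega> \<in> space M \<Longrightarrow> D \<omega> \<in> K"
    and D: "D \<in> M \<rightarrow>\<^sub>M count_space UNIV"
    and indep: "\<And>A d. A \<in> rv_events M X \<Longrightarrow> d \<in> K \<Longrightarrow>
                  prob (A \<inter> (D -` {d} \<inter> space M)) = prob A * prob (D -` {d} \<inter> space M)"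
    and a: "\<And>d. d \<in> K \<Longrightarrow> 0 \<le> a d \<and> a d \<le> 1"
  shows "(\<integral>\<^sup>+\<omega>. \<phi> (D \<omega>) * indicator {\<omega> \<in> space M. X \<omega> \<le> a (D \<omega>)} \<omega> \<partial>M)
       \<le> (\<integral>\<^sup>+\<omega>. \<phi> (D \<omega>) * ennreal (a (D \<omega>)) \<partial>M)"
proof -
  let ?A = "\<lambda>d. {\<omega> \<in> space M. X \<omega> \<le> a d}"
  have "(\<integral>\<^sup>+\<omega>. \<phi> (D \<omega>) * indicator {\<omega> \<in> space M. X \<omega> \<le> a (D \<omega>)} \<omega> \<partial>M)
      = (\<integral>\<^sup>+\<omega>. \<phi> (D \<omega>) * indicator (?A (D \<omega>)) \<omega> \<partial>M)"
    by (intro nn_integral_cong) (simp add: indicator_def)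
  also have "\<dots> = (\<integral>\<^sup>+\<omega>. \<phi> (D \<omega>) * ennreal (prob (?A (D \<omega>))) \<partial>M)"
    using X(1) vimage_in_rv_events[of "{..a _}" M X]
    by (intro nn_integral_indep_finite_range[OF K D] indep) auto
  also have "\<dots> \<le> (\<integral>\<^sup>+\<omega>. \<phi> (D \<omega>) * ennreal (a (D \<omega>)) \<partial>M)"
    using X(2) a K(2) unfolding super_uniform_def
    by (intro nn_integral_mono mult_left_mono ennreal_leI) auto
  finally show ?thesis .
qed

lemma nn_integral_superuniform_le_indicator:
  assumes X: "X \<in> borel_measurable M" "super_uniform M X"
    and K: "finite K" "\<And>\<omega>. \<omega> \<in> space M \<Longrightarrow> D \<omega> \<in> K"
    and D: "D \<in> M \<rightarrow>\<^sub>M count_space UNIV"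
    and indep: "\<And>A d. A \<in> rv_events M X \<Longrightarrow> d \<in> K \<Longrightarrow>
                  prob (A \<inter> (D -` {d} \<inter> space M)) = prob A * prob (D -` {d} \<inter> space M)"
    and l: "\<And>d. d \<in> K \<Longrightarrow> 0 \<le> l d \<and> l d \<le> 1"
  shows "(\<integral>\<^sup>+\<omega>. \<phi> (D \<omega>) * ennreal (1 - l (D \<omega>)) \<partial>M)
       \<le> (\<integral>\<^sup>+\<omega>. \<phi> (D \<omega>) * indicator {\<omega> \<in> space M. l (D \<omega>) < X \<omega>} \<omega> \<partial>M)"
proof -
  let ?A = "\<lambda>d. {\<omega> \<in> space M. l d < X \<omega>}"
  have "1 - l d \<le> prob (?A d)" if "d \<in> K" for d
  proof -
    have "?A d = space M - {\<omega> \<in> space M. X \<omega> \<le> l d}" by auto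
    then have "prob (?A d) = 1 - prob {\<omega> \<in> space M. X \<omega> \<le> l d}"
      using X(1) by (simp add: prob_compl)
    then show ?thesis
      using X(2) l[OF that] unfolding super_uniform_def by auto
  qed
  then have "(\<integral>\<^sup>+\<omega>. \<phi> (D \<omega>) * ennreal (1 - l (D \<omega>)) \<partial>M)
      \<le> (\<integral>\<^sup>+\<omega>. \<phi> (D \<omega>) * ennreal (prob (?A (D \<omega>))) \<partial>M)"
    using K(2) by (intro nn_integral_mono mult_left_mono ennreal_leI) auto
  also have "\<dots> = (\<integral>\<^sup>+\<omega>. \<phi> (D \<omega>) * indicator (?A (D \<omega>)) \<omega> \<partial>M)"
    using X(1) vimage_in_rv_events[of "{l _<..}" M X]
    by (intro nn_integral_indep_finite_range[OF K D, symmetric] indep) auto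
  also have "\<dots> = (\<integral>\<^sup>+\<omega>. \<phi> (D \<omega>) * indicator {\<omega> \<in> space M. l (D \<omega>) < X \<omega>} \<omega> \<partial>M)"
    by (intro nn_integral_cong) (simp add: indicator_def)
  finally show ?thesis .
qed

lemma prob_Int_indep_sets_rest:
  assumes indep: "indep_sets A I" and j: "j \<in> I" and stable: "\<And>i. i \<in> I \<Longrightarrow> Int_stable (A i)"
    and S: "S \<in> A j" and B: "B \<in> sigma_sets (space M) (\<Union>i \<in> I - {j}. A i)"
  shows "prob (S \<inter> B) = prob S * prob B"
proof -
  let ?J = "\<lambda>b. if b then {j} else I - {j}"
  have "indep_sets (\<lambda>b. sigma_sets (space M) (\<Union>i \<in> ?J b. A i)) UNIV"
  proof (rule indep_sets_collect_sigma)
    show "indep_sets A (\<Union>b. ?J b)"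
      using indep j by (simp add: UNIV_bool insert_absorb)
  qed (auto simp: disjoint_family_on_def j intro: stable split: if_splits)
  then have "prob (\<Inter>b. if b then S else B) = (\<Prod>b\<in>UNIV. prob (if b then S else B))"
    using S B by (intro indep_setsD) auto
  then show ?thesis by (simp add: UNIV_bool Int_commute mult.commute)
qed

end

section \<open>Comparing conditional expectations\<close>

context sigma_finite_subalgebra
begin

lemma set_nn_integral_nn_cond_exp:
  assumes [measurable]: "A \<in> sets F" "f \<in> borel_measurable M"
  shows "(\<integral>\<^sup>+x\<in>A. nn_cond_exp M F f x \<partial>M) = (\<integral>\<^sup>+x\<in>A. f x \<partial>M)"
  using nn_cond_exp_intg[of "indicator A" f] by (simp add: mult.commute)

lemma set_nn_integral_min_nn_cond_exp:
  assumes [measurable]: "f \<in> borel_measurable M" "g \<in> borel_measurable M"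
    and le: "\<And>A. A \<in> sets F \<Longrightarrow> (\<integral>\<^sup>+x\<in>A. f x \<partial>M) \<le> (\<integral>\<^sup>+x\<in>A. g x \<partial>M)"
    and A [measurable]: "A \<in> sets F"
  shows "(\<integral>\<^sup>+x\<in>A. f x \<partial>M) = (\<integral>\<^sup>+x\<in>A. min (nn_cond_exp M F f x) (nn_cond_exp M F g x) \<partial>M)"
proof -
  let ?u = "nn_cond_exp M F f" and ?v = "nn_cond_exp M F g"
  have sets_F_M: "A \<in> sets M" if "A \<in> sets F" for A
    using subalg that by (auto simp: subalgebra_def)
  define B where "B = {x \<in> space M. ?v x < ?u x}"
  have "B = {x \<in> space F. ?v x < ?u x}"
    using subalg by (simp add: B_def subalgebra_def)
  also have "\<dots> \<in> sets F" by measurable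
  finally have AB [measurable]: "A \<inter> B \<in> sets F" "A - B \<in> sets F" by auto
  have split: "(\<integral>\<^sup>+x\<in>A. h x \<partial>M) = (\<integral>\<^sup>+x\<in>A \<inter> B. h x \<partial>M) + (\<integral>\<^sup>+x\<in>A - B. h x \<partial>M)"
    if "h \<in> borel_measurable M" for h
    using nn_integral_disjoint_pair[OF that sets_F_M[OF AB(1)] sets_F_M[OF AB(2)]]
    by (simp add: Int_Diff_Un Int_Diff_disjoint)
  have "(\<integral>\<^sup>+x\<in>A \<inter> B. ?u x \<partial>M) \<le> (\<integral>\<^sup>+x\<in>A \<inter> B. ?v x \<partial>M)"
    using le[of "A \<inter> B"] by (simp add: set_nn_integral_nn_cond_exp)
  moreover have "(\<integral>\<^sup>+x\<in>A \<inter> B. ?v x \<partial>M) \<le> (\<integral>\<^sup>+x\<in>A \<inter> B. ?u x \<partial>M)"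
    by (intro nn_integral_mono) (auto simp: B_def indicator_def)
  ultimately have "(\<integral>\<^sup>+x\<in>A \<inter> B. ?u x \<partial>M) = (\<integral>\<^sup>+x\<in>A \<inter> B. ?v x \<partial>M)"
    by (rule antisym)
  also have "\<dots> = (\<integral>\<^sup>+x\<in>A \<inter> B. min (?u x) (?v x) \<partial>M)"
    by (intro nn_integral_cong) (simp add: B_def indicator_def)
  finally have on_B: "(\<integral>\<^sup>+x\<in>A \<inter> B. ?u x \<partial>M) = (\<integral>\<^sup>+x\<in>A \<inter> B. min (?u x) (?v x) \<partial>M)" .
  have off_B: "(\<integral>\<^sup>+x\<in>A - B. ?u x \<partial>M) = (\<integral>\<^sup>+x\<in>A - B. min (?u x) (?v x) \<partial>M)"
    by (intro nn_integral_cong) (auto simp: B_def indicator_def min_def)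
  have "(\<integral>\<^sup>+x\<in>A. f x \<partial>M) = (\<integral>\<^sup>+x\<in>A. ?u x \<partial>M)"
    by (simp add: set_nn_integral_nn_cond_exp)
  also have "\<dots> = (\<integral>\<^sup>+x\<in>A \<inter> B. ?u x \<partial>M) + (\<integral>\<^sup>+x\<in>A - B. ?u x \<partial>M)"
    by (rule split) simp
  also have "\<dots> = (\<integral>\<^sup>+x\<in>A. min (?u x) (?v x) \<partial>M)"
    unfolding on_B off_B by (rule split[symmetric]) simp
  finally show ?thesis .
qed

text \<open>The minimum of the two conditional expectations has the same integrals over F-sets as f,
  so it is a version of the conditional expectation of f; this avoids subtracting integrals that
  may be infinite.\<close>
lemma nn_cond_exp_mono_set_nn_integral:
  assumes [measurable]: "f \<in> borel_measurable M" "g \<in> borel_measurable M"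
    and le: "\<And>A. A \<in> sets F \<Longrightarrow> (\<integral>\<^sup>+x\<in>A. f x \<partial>M) \<le> (\<integral>\<^sup>+x\<in>A. g x \<partial>M)"
  shows "AE x in M. nn_cond_exp M F f x \<le> nn_cond_exp M F g x"
proof -
  have "AE x in M. min (nn_cond_exp M F f x) (nn_cond_exp M F g x) = nn_cond_exp M F f x"
    by (rule nn_cond_exp_charact) (auto intro: set_nn_integral_min_nn_cond_exp[OF assms])
  then show ?thesis
    by eventually_elim (metis min.cobounded2)
qed

end

section \<open>Counterfactual histories of a null test\<close>

locale async_null_test = prob_space M for M :: "'a measure" +
  fixes P :: "nat \<Rightarrow> 'a \<Rightarrow> real" and H0 :: "nat set" and E :: "nat \<Rightarrow> nat"
    and ga ha :: "nat \<Rightarrow> history \<Rightarrow> real" and t :: nat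
  assumes measurable_P [measurable]: "\<And>i. P i \<in> borel_measurable M"
    and super_uniform_P: "super_uniform M (P t)"
    and indep_P: "prob_space.indep_sets M
        (\<lambda>k. case k of Some i \<Rightarrow> sigma_sets (space M) (rv_events M (P i))
                     | None \<Rightarrow> sigma_sets (space M) (\<Union>i\<in>{1..} - H0. rv_events M (P i)))
        (Some ` H0 \<union> {None})"
    and level_nonneg: "\<And>i H. 0 \<le> ga i H"
    and level_le_threshold: "\<And>i H. ga i H \<le> ha i H"
    and threshold_less_1: "\<And>i H. ha i H < 1"
    and monotone_ga: "monotone_rule ga" and monotone_ha: "monotone_rule ha"
    and t_pos: "1 \<le> t" and t_le_E: "t \<le> E t" and t_null: "t \<in> H0"
begin

abbreviation obs_hist :: "nat \<Rightarrow> 'a \<Rightarrow> history" where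
  "obs_hist n \<omega> \<equiv> hist ga ha E (\<lambda>i. P i \<omega>) n"

abbreviation hist_with :: "real \<Rightarrow> nat \<Rightarrow> 'a \<Rightarrow> history" where
  "hist_with c n \<omega> \<equiv> hist ga ha E ((\<lambda>i. P i \<omega>)(t := c)) n"

abbreviation alpha :: "'a \<Rightarrow> real" where
  "alpha \<omega> \<equiv> test_level ga ha E (\<lambda>i. P i \<omega>) t"

abbreviation lambda :: "'a \<Rightarrow> real" where
  "lambda \<omega> \<equiv> cand_threshold ga ha E (\<lambda>i. P i \<omega>) t"

lemma measurable_obs_hist [measurable]: "obs_hist n \<in> M \<rightarrow>\<^sub>M count_space UNIV"
  by (rule measurable_hist) (simp add: borel_measurable_le)

lemma obs_hist_eq_take_hist_with:
  assumes "m < E t" "m \<le> n"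
  shows "obs_hist m \<omega> = take m (hist_with c n \<omega>)"
proof -
  have "hist_with c m \<omega> = obs_hist m \<omega>"
    by (rule hist_cong_before_decision[where t = t]) (use assms in auto)
  then show ?thesis
    using take_hist[OF assms(2)] by simp
qed

lemma obs_hist_eq_hist_with_0:
  assumes "P t \<omega> \<le> alpha \<omega>"
  shows "obs_hist n \<omega> = hist_with 0 n \<omega>"
proof (rule hist_cong_same_decisions[where t = t])
  let ?H = "obs_hist (t - 1) \<omega>"
  have "P t \<omega> \<le> ga t ?H" "0 \<le> ga t ?H" "ga t ?H \<le> ha t ?H"
    using assms level_nonneg level_le_threshold by (simp_all add: test_level_def)
  then show "P t \<omega> \<le> ga t ?H \<longleftrightarrow> ((\<lambda>i. P i \<omega>)(t := 0)) t \<le> ga t ?H"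
    and "P t \<omega> \<le> ha t ?H \<longleftrightarrow> ((\<lambda>i. P i \<omega>)(t := 0)) t \<le> ha t ?H"
    by auto
qed (use t_pos t_le_E in auto)

lemma obs_hist_eq_hist_with_1:
  assumes "lambda \<omega> < P t \<omega>"
  shows "obs_hist n \<omega> = hist_with 1 n \<omega>"
proof (rule hist_cong_same_decisions[where t = t])
  let ?H = "obs_hist (t - 1) \<omega>"
  have "ha t ?H < P t \<omega>" "ga t ?H \<le> ha t ?H" "ha t ?H < 1"
    using assms level_le_threshold threshold_less_1 by (simp_all add: cand_threshold_def)
  then show "P t \<omega> \<le> ga t ?H \<longleftrightarrow> ((\<lambda>i. P i \<omega>)(t := 1)) t \<le> ga t ?H"
    and "P t \<omega> \<le> ha t ?H \<longleftrightarrow> ((\<lambda>i. P i \<omega>)(t := 1)) t \<le> ha t ?H"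
    by auto
qed (use t_pos t_le_E in auto)

lemma hist_le_obs_hist_with_0: "hist_le (obs_hist n \<omega>) (hist_with 0 n \<omega>)"
  by (rule hist_le_hist[OF monotone_ga monotone_ha level_nonneg level_le_threshold threshold_less_1])
    auto

lemma hist_le_hist_with_1_obs: "hist_le (hist_with 1 n \<omega>) (obs_hist n \<omega>)"
  by (rule hist_le_hist[OF monotone_ga monotone_ha level_nonneg level_le_threshold threshold_less_1])
    (auto split: if_split_asm)

definition pvalue_events :: "nat option \<Rightarrow> 'a set set" where
  "pvalue_events k = (case k of Some i \<Rightarrow> sigma_sets (space M) (rv_events M (P i))
                       | None \<Rightarrow> sigma_sets (space M) (\<Union>i\<in>{1..} - H0. rv_events M (P i)))"

definition sigma_other_pvalues :: "'a measure" where
  "sigma_other_pvalues = sigma (space M) (\<Union>k \<in> Some ` H0 \<union> {None} - {Some t}. pvalue_events k)"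

lemma pvalue_events_sigma_algebra: "sigma_algebra (space M) (pvalue_events k)"
  unfolding pvalue_events_def rv_events_def
  by (cases k) (auto intro!: sigma_algebra_sigma_sets)

lemma pvalue_events_subset_Pow: "pvalue_events k \<subseteq> Pow (space M)"
  unfolding pvalue_events_def rv_events_def
  by (cases k) (auto dest: sigma_sets_into_sp[rotated])

lemma pvalue_events_subset_events: "k \<in> Some ` H0 \<union> {None} \<Longrightarrow> pvalue_events k \<subseteq> events"
  using indep_P unfolding pvalue_events_def indep_sets_def by blast

lemma
  shows space_sigma_other_pvalues [simp]: "space sigma_other_pvalues = space M"
    and sets_sigma_other_pvalues:
      "sets sigma_other_pvalues = sigma_sets (space M) (\<Union>k \<in> Some ` H0 \<union> {None} - {Some t}. pvalue_events k)"
  using pvalue_events_subset_Pow unfolding sigma_other_pvalues_def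
  by (simp_all add: space_measure_of_conv UN_subset_iff)

lemma subalgebra_sigma_other_pvalues: "subalgebra M sigma_other_pvalues"
  unfolding subalgebra_def sets_sigma_other_pvalues
  using pvalue_events_subset_events by (simp add: sets.sigma_sets_subset UN_subset_iff)

lemma P_le_in_sigma_other_pvalues:
  assumes "1 \<le> i" "i \<noteq> t"
  shows "{\<omega> \<in> space M. P i \<omega> \<le> c} \<in> sets sigma_other_pvalues"
proof -
  have "{\<omega> \<in> space M. P i \<omega> \<le> c} \<in> rv_events M (P i)"
    using vimage_in_rv_events[of "{..c}" M "P i"] by simp
  then have "{\<omega> \<in> space M. P i \<omega> \<le> c} \<in> pvalue_events (if i \<in> H0 then Some i else None)"
    using assms(1) by (auto simp: pvalue_events_def)
  then show ?thesis
    using assms(2) unfolding sets_sigma_other_pvalues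
    by (intro sigma_sets.Basic UN_I[of "if i \<in> H0 then Some i else None"]) auto
qed

lemma measurable_hist_with_other: "hist_with c n \<in> sigma_other_pvalues \<rightarrow>\<^sub>M count_space UNIV"
proof (rule measurable_hist)
  fix i c' assume "1 \<le> (i::nat)"
  show "{\<omega> \<in> space sigma_other_pvalues. ((\<lambda>i. P i \<omega>)(t := c)) i \<le> c'} \<in> sets sigma_other_pvalues"
  proof (cases "i = t")
    case True
    then show ?thesis
      using sets.top[of sigma_other_pvalues] by (cases "c \<le> c'") simp_all
  qed (use P_le_in_sigma_other_pvalues \<open>1 \<le> i\<close> in simp)
qed

lemma measurable_hist_with [measurable]: "hist_with c n \<in> M \<rightarrow>\<^sub>M count_space UNIV"
  by (rule measurable_from_subalg[OF subalgebra_sigma_other_pvalues measurable_hist_with_other])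

text \<open>Replacing P t by a constant makes the history a function of the other p-values, hence
  independent of P t.\<close>
lemma indep_hist_with:
  assumes "A \<in> rv_events M (P t)"
  shows "prob (A \<inter> (hist_with c n -` {H} \<inter> space M)) = prob A * prob (hist_with c n -` {H} \<inter> space M)"
proof (rule prob_Int_indep_sets_rest)
  show "indep_sets pvalue_events (Some ` H0 \<union> {None})"
    using indep_P unfolding pvalue_events_def .
  show "A \<in> pvalue_events (Some t)"
    using assms by (simp add: pvalue_events_def)
  show "Int_stable (pvalue_events k)" for k
    using pvalue_events_sigma_algebra[of k] unfolding sigma_algebra_def by (meson algebra.Int_stable)
  show "hist_with c n -` {H} \<inter> space M \<in> sigma_sets (space M) (\<Union>k \<in> Some ` H0 \<union> {None} - {Some t}. pvalue_events k)"
    using measurable_sets[OF measurable_hist_with_other, of "{H}"]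
    by (simp add: sets_sigma_other_pvalues)
qed (use t_null in auto)

lemma alpha_lambda_eq_take_hist_with:
  assumes "t - 1 \<le> n"
  shows "alpha \<omega> = ga t (take (t - 1) (hist_with c n \<omega>))"
    and "lambda \<omega> = ha t (take (t - 1) (hist_with c n \<omega>))"
proof -
  have "t - 1 < E t" using t_pos t_le_E by simp
  then show "alpha \<omega> = ga t (take (t - 1) (hist_with c n \<omega>))"
    and "lambda \<omega> = ha t (take (t - 1) (hist_with c n \<omega>))"
    using obs_hist_eq_take_hist_with[where c = c, OF _ assms] by (simp_all add: test_level_def cand_threshold_def)
qed

lemma level_bounds: "0 \<le> ga t H" "ga t H \<le> ha t H" "ha t H \<le> 1"
  using level_nonneg level_le_threshold threshold_less_1 less_imp_le by blast+

lemma nn_integral_rejected_le_level: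
  fixes w :: "history \<Rightarrow> ennreal" and \<Gamma> :: "history \<Rightarrow> real"
  assumes N: "E t \<le> N" and \<Gamma>_pos: "\<And>H. 0 < \<Gamma> H"
    and \<Gamma>_mono: "\<And>H H'. H \<in> histories N \<Longrightarrow> H' \<in> histories N \<Longrightarrow> hist_le H H' \<Longrightarrow> \<Gamma> H \<le> \<Gamma> H'"
  shows "(\<integral>\<^sup>+\<omega>. w (obs_hist (E t - 1) \<omega>) * ennreal ((if P t \<omega> \<le> alpha \<omega> then 1 else 0) / \<Gamma> (obs_hist N \<omega>)) \<partial>M)
       \<le> (\<integral>\<^sup>+\<omega>. w (obs_hist (E t - 1) \<omega>) * ennreal (alpha \<omega> / \<Gamma> (obs_hist N \<omega>)) \<partial>M)"
    (is "?L \<le> ?R")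
proof -
  let ?D = "hist_with 0 N"
  define a where "a H = ga t (take (t - 1) H)" for H
  define \<phi> where "\<phi> H = w (take (E t - 1) H) * ennreal (1 / \<Gamma> H)" for H
  have prefix: "obs_hist (E t - 1) \<omega> = take (E t - 1) (?D \<omega>)" and level: "alpha \<omega> = a (?D \<omega>)" for \<omega>
    using N t_pos t_le_E obs_hist_eq_take_hist_with[where c = 0 and n = N]
      alpha_lambda_eq_take_hist_with[where c = 0 and n = N]
    by (simp_all add: a_def)
  have "?L = (\<integral>\<^sup>+\<omega>. \<phi> (?D \<omega>) * indicator {\<omega> \<in> space M. P t \<omega> \<le> a (?D \<omega>)} \<omega> \<partial>M)"
  proof (intro nn_integral_cong)
    fix \<omega> assume "\<omega> \<in> space M"
    then show "w (obs_hist (E t - 1) \<omega>) * ennreal ((if P t \<omega> \<le> alpha \<omega> then 1 else 0) / \<Gamma> (obs_hist N \<omega>))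
        = \<phi> (?D \<omega>) * indicator {\<omega> \<in> space M. P t \<omega> \<le> a (?D \<omega>)} \<omega>"
      using obs_hist_eq_hist_with_0[of \<omega> N] unfolding prefix level by (simp add: \<phi>_def)
  qed
  also have "\<dots> \<le> (\<integral>\<^sup>+\<omega>. \<phi> (?D \<omega>) * ennreal (a (?D \<omega>)) \<partial>M)"
    using level_bounds unfolding a_def
    by (intro nn_integral_indicator_le_superuniform[OF measurable_P super_uniform_P finite_histories
          hist_in_histories measurable_hist_with indep_hist_with]) (auto intro: order_trans)
  also have "\<dots> \<le> ?R"
  proof (intro nn_integral_mono)
    fix \<omega>
    have "\<Gamma> (obs_hist N \<omega>) \<le> \<Gamma> (?D \<omega>)"
      by (intro \<Gamma>_mono hist_in_histories hist_le_obs_hist_with_0)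
    then have "a (?D \<omega>) / \<Gamma> (?D \<omega>) \<le> alpha \<omega> / \<Gamma> (obs_hist N \<omega>)"
      using level \<Gamma>_pos level_bounds(1) unfolding a_def by (simp add: divide_left_mono)
    moreover have "ennreal (1 / \<Gamma> (?D \<omega>)) * ennreal (a (?D \<omega>)) = ennreal (a (?D \<omega>) / \<Gamma> (?D \<omega>))"
      using level_bounds(1) unfolding a_def by (simp add: ennreal_mult''[symmetric])
    ultimately show "\<phi> (?D \<omega>) * ennreal (a (?D \<omega>)) \<le> w (obs_hist (E t - 1) \<omega>) * ennreal (alpha \<omega> / \<Gamma> (obs_hist N \<omega>))"
      unfolding \<phi>_def prefix by (simp add: mult.assoc mult_left_mono ennreal_leI)
  qed
  finally show ?thesis .
qed

lemma nn_integral_level_le_not_candidate: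
  fixes w :: "history \<Rightarrow> ennreal" and \<Gamma> :: "history \<Rightarrow> real"
  assumes N: "E t \<le> N" and \<Gamma>_pos: "\<And>H. 0 < \<Gamma> H"
    and \<Gamma>_mono: "\<And>H H'. H \<in> histories N \<Longrightarrow> H' \<in> histories N \<Longrightarrow> hist_le H H' \<Longrightarrow> \<Gamma> H \<le> \<Gamma> H'"
  shows "(\<integral>\<^sup>+\<omega>. w (obs_hist (E t - 1) \<omega>) * ennreal (alpha \<omega> / \<Gamma> (obs_hist N \<omega>)) \<partial>M)
       \<le> (\<integral>\<^sup>+\<omega>. w (obs_hist (E t - 1) \<omega>) * ennreal (alpha \<omega> * (if P t \<omega> > lambda \<omega> then 1 else 0)
                                                 / ((1 - lambda \<omega>) * \<Gamma> (obs_hist N \<omega>))) \<partial>M)"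
    (is "?L \<le> ?R")
proof -
  let ?D = "hist_with 1 N"
  define a where "a H = ga t (take (t - 1) H)" for H
  define l where "l H = ha t (take (t - 1) H)" for H
  define \<psi> where "\<psi> H = w (take (E t - 1) H) * ennreal (a H / ((1 - l H) * \<Gamma> H))" for H
  have prefix: "obs_hist (E t - 1) \<omega> = take (E t - 1) (?D \<omega>)"
    and level: "alpha \<omega> = a (?D \<omega>)" and threshold: "lambda \<omega> = l (?D \<omega>)" for \<omega>
    using N t_pos t_le_E obs_hist_eq_take_hist_with[where c = 1 and n = N]
      alpha_lambda_eq_take_hist_with[where c = 1 and n = N]
    by (simp_all add: a_def l_def)
  have a_nonneg: "0 \<le> a H" and l_less_1: "l H < 1" for H
    unfolding a_def l_def by (simp_all add: level_nonneg threshold_less_1)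
  have "?L \<le> (\<integral>\<^sup>+\<omega>. \<psi> (?D \<omega>) * ennreal (1 - l (?D \<omega>)) \<partial>M)"
  proof (intro nn_integral_mono)
    fix \<omega>
    have "\<Gamma> (?D \<omega>) \<le> \<Gamma> (obs_hist N \<omega>)"
      by (intro \<Gamma>_mono hist_in_histories hist_le_hist_with_1_obs)
    then have "alpha \<omega> / \<Gamma> (obs_hist N \<omega>) \<le> a (?D \<omega>) / \<Gamma> (?D \<omega>)"
      using level \<Gamma>_pos a_nonneg by (simp add: divide_left_mono)
    also have "\<dots> = a (?D \<omega>) / ((1 - l (?D \<omega>)) * \<Gamma> (?D \<omega>)) * (1 - l (?D \<omega>))"
      using l_less_1[of "?D \<omega>"] \<Gamma>_pos[of "?D \<omega>"] by (simp add: field_simps)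
    finally have "ennreal (alpha \<omega> / \<Gamma> (obs_hist N \<omega>))
        \<le> ennreal (a (?D \<omega>) / ((1 - l (?D \<omega>)) * \<Gamma> (?D \<omega>))) * ennreal (1 - l (?D \<omega>))"
      using l_less_1[of "?D \<omega>"] by (simp add: ennreal_mult''[symmetric] ennreal_leI)
    then show "w (obs_hist (E t - 1) \<omega>) * ennreal (alpha \<omega> / \<Gamma> (obs_hist N \<omega>))
        \<le> \<psi> (?D \<omega>) * ennreal (1 - l (?D \<omega>))"
      unfolding \<psi>_def prefix by (simp add: mult.assoc mult_left_mono)
  qed
  also have "\<dots> \<le> (\<integral>\<^sup>+\<omega>. \<psi> (?D \<omega>) * indicator {\<omega> \<in> space M. l (?D \<omega>) < P t \<omega>} \<omega> \<partial>M)"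
    using level_bounds unfolding l_def
    by (intro nn_integral_superuniform_le_indicator[OF measurable_P super_uniform_P finite_histories
          hist_in_histories measurable_hist_with indep_hist_with]) (auto intro: order_trans)
  also have "\<dots> = ?R"
  proof (intro nn_integral_cong)
    fix \<omega> assume "\<omega> \<in> space M"
    then show "\<psi> (?D \<omega>) * indicator {\<omega> \<in> space M. l (?D \<omega>) < P t \<omega>} \<omega>
        = w (obs_hist (E t - 1) \<omega>) * ennreal (alpha \<omega> * (if P t \<omega> > lambda \<omega> then 1 else 0)
                                                 / ((1 - lambda \<omega>) * \<Gamma> (obs_hist N \<omega>)))"
      using obs_hist_eq_hist_with_1[of \<omega> N] unfolding prefix level threshold by (simp add: \<psi>_def)
  qed
  finally show ?thesis .
qed

theorem nn_cond_exp_bounds: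
  fixes g :: "nat list \<Rightarrow> real" and m :: nat
  assumes g_pos: "\<And>xs. length xs = m \<Longrightarrow> 0 < g xs"
    and g_mono: "\<And>xs ys. length xs = m \<Longrightarrow> length ys = m \<Longrightarrow> list_all2 (\<le>) xs ys \<Longrightarrow> g xs \<le> g ys"
  defines "F \<equiv> vimage_algebra (space M) (obs_hist (E t - 1)) (count_space UNIV)"
    and "G \<equiv> \<lambda>\<omega>. g (map (\<lambda>s. card (rej_set ga ha E (\<lambda>i. P i \<omega>) s)) [1..<m + 1])"
  shows "AE \<omega> in M.
           nn_cond_exp M F (\<lambda>\<omega>. ennreal (alpha \<omega> / G \<omega>)) \<omega>
             \<le> nn_cond_exp M F (\<lambda>\<omega>. ennreal (alpha \<omega> * (if P t \<omega> > lambda \<omega> then 1 else 0)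
                                              / ((1 - lambda \<omega>) * G \<omega>))) \<omega>
         \<and> nn_cond_exp M F (\<lambda>\<omega>. ennreal ((if P t \<omega> \<le> alpha \<omega> then 1 else 0) / G \<omega>)) \<omega>
             \<le> nn_cond_exp M F (\<lambda>\<omega>. ennreal (alpha \<omega> / G \<omega>)) \<omega>"
proof -
  define N where "N = max m (E t)"
  let ?\<Gamma> = "\<lambda>H. g (rej_counts m H)"
  have G_eq: "G = (\<lambda>\<omega>. ?\<Gamma> (obs_hist N \<omega>))"
    unfolding G_def N_def by (simp add: rej_counts_hist)
  have \<Gamma>_mono: "?\<Gamma> H \<le> ?\<Gamma> H'" if "H \<in> histories N" "H' \<in> histories N" "hist_le H H'" for H H'
    using that by (intro g_mono rej_counts_mono[of H H' N]) (simp_all add: N_def)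
  have [measurable]: "(\<lambda>\<omega>. alpha \<omega>) \<in> borel_measurable M" "(\<lambda>\<omega>. lambda \<omega>) \<in> borel_measurable M"
    "G \<in> borel_measurable M"
    unfolding test_level_def cand_threshold_def G_eq
    by (rule measurable_compose[OF measurable_obs_hist borel_measurable_count_space])+
  have "subalgebra M F"
    unfolding F_def subalgebra_def by (simp add: sets_image_in_sets)
  then interpret sigma_finite_subalgebra M F
    by (intro finite_measure_subalgebra_is_sigma_finite finite_measure_subalgebra.intro
        finite_measure_subalgebra_axioms.intro finite_measure_axioms)
  have set_nn_integral_F: "\<exists>S. \<forall>f. (\<integral>\<^sup>+x\<in>A. f x \<partial>M) = (\<integral>\<^sup>+\<omega>. indicator S (obs_hist (E t - 1) \<omega>) * f \<omega> \<partial>M)"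
    if "A \<in> sets F" for A
  proof -
    have "A \<in> {obs_hist (E t - 1) -` S \<inter> space M | S. S \<in> sets (count_space UNIV)}"
      using that unfolding F_def by (subst (asm) sets_vimage_algebra2) auto
    then obtain S where "A = obs_hist (E t - 1) -` S \<inter> space M"
      by blast
    then show ?thesis
      by (intro exI[of _ S] allI nn_integral_cong) (auto simp: indicator_def)
  qed
  have N: "E t \<le> N" by (simp add: N_def)
  show ?thesis
  proof (rule AE_conjI; rule nn_cond_exp_mono_set_nn_integral)
    fix A assume "A \<in> sets F"
    with set_nn_integral_F obtain S where S: "\<And>f. (\<integral>\<^sup>+x\<in>A. f x \<partial>M) = (\<integral>\<^sup>+\<omega>. indicator S (obs_hist (E t - 1) \<omega>) * f \<omega> \<partial>M)"
      by blast
    show "(\<integral>\<^sup>+x\<in>A. ennreal (alpha x / G x) \<partial>M)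
        \<le> (\<integral>\<^sup>+x\<in>A. ennreal (alpha x * (if P t x > lambda x then 1 else 0) / ((1 - lambda x) * G x)) \<partial>M)"
      unfolding S G_eq by (rule nn_integral_level_le_not_candidate[OF N _ \<Gamma>_mono]) (simp_all add: g_pos)
    show "(\<integral>\<^sup>+x\<in>A. ennreal ((if P t x \<le> alpha x then 1 else 0) / G x) \<partial>M)
        \<le> (\<integral>\<^sup>+x\<in>A. ennreal (alpha x / G x) \<partial>M)"
      unfolding S G_eq by (rule nn_integral_rejected_le_level[OF N _ \<Gamma>_mono]) (simp_all add: g_pos)
  qed measurable
qed

end

theorem lemma1:
  fixes M :: "'a measure"
    and P :: "nat \<Rightarrow> 'a \<Rightarrow> real"
    and H0 :: "nat set"
    and E :: "nat \<Rightarrow> nat"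
    and ga ha :: "nat \<Rightarrow> history \<Rightarrow> real"
    and Mh t :: nat
    and g :: "nat list \<Rightarrow> real"
  assumes prob: "prob_space M"
    and meas: "\<And>i. P i \<in> borel_measurable M"
    and superunif: "\<And>i u. i \<in> H0 \<Longrightarrow> 0 \<le> u \<Longrightarrow> u \<le> 1 \<Longrightarrow>
                      measure M {\<omega> \<in> space M. P i \<omega> \<le> u} \<le> u"
    and indep: "prob_space.indep_sets M
        (\<lambda>k. case k of Some i \<Rightarrow> sigma_sets (space M) (rv_events M (P i))
                     | None \<Rightarrow> sigma_sets (space M) (\<Union>i\<in>{1..} - H0. rv_events M (P i)))
        (Some ` H0 \<union> {None})"
    and dec: "\<And>i. 1 \<le> i \<Longrightarrow> i \<le> E i"
    and alpha_nonneg: "\<And>i H. 0 \<le> ga i H"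
    and alpha_le_lambda: "\<And>i H. ga i H \<le> ha i H"
    and lambda_lt1: "\<And>i H. ha i H < 1"
    and mono_g: "monotone_rule ga"
    and mono_h: "monotone_rule ha"
    and g_pos: "\<And>xs. length xs = Mh \<Longrightarrow> 0 < g xs"
    and g_mono: "\<And>xs ys. length xs = Mh \<Longrightarrow> length ys = Mh \<Longrightarrow> list_all2 (\<le>) xs ys \<Longrightarrow> g xs \<le> g ys"
    and t: "1 \<le> t" "t \<le> Mh" "t \<in> H0"
  defines "F \<equiv> vimage_algebra (space M) (\<lambda>\<omega>. hist ga ha E (\<lambda>i. P i \<omega>) (E t - 1)) (count_space UNIV)"
    and "alpha \<equiv> (\<lambda>\<omega>. test_level ga ha E (\<lambda>i. P i \<omega>) t)"
    and "lambda \<equiv> (\<lambda>\<omega>. cand_threshold ga ha E (\<lambda>i. P i \<omega>) t)"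
    and "G \<equiv> (\<lambda>\<omega>. g (map (\<lambda>s. card (rej_set ga ha E (\<lambda>i. P i \<omega>) s)) [1..<Mh + 1]))"
  shows "AE \<omega> in M.
           nn_cond_exp M F (\<lambda>\<omega>. ennreal (alpha \<omega> / G \<omega>)) \<omega>
             \<le> nn_cond_exp M F (\<lambda>\<omega>. ennreal (alpha \<omega> * (if P t \<omega> > lambda \<omega> then 1 else 0)
                                              / ((1 - lambda \<omega>) * G \<omega>))) \<omega>
         \<and> nn_cond_exp M F (\<lambda>\<omega>. ennreal ((if P t \<omega> \<le> alpha \<omega> then 1 else 0) / G \<omega>)) \<omega>
             \<le> nn_cond_exp M F (\<lambda>\<omega>. ennreal (alpha \<omega> / G \<omega>)) \<omega>"
proof -
  interpret async_null_test M P H0 E ga ha t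
  proof (rule async_null_test.intro[OF prob async_null_test_axioms.intro])
    show "super_uniform M (P t)"
      using superunif t(3) by (simp add: super_uniform_def)
  qed (fact meas indep dec[OF t(1)] alpha_nonneg alpha_le_lambda lambda_lt1 mono_g mono_h t(1,3))+
  show ?thesis
    unfolding F_def alpha_def lambda_def G_def by (rule nn_cond_exp_bounds[OF g_pos g_mono])
qed

end
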